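(* Let $\gamma_1,\dots,\gamma_n,\beta_1,\dots,\beta_n\in\mathbb{C}$ be non-zero with $\gamma_j=\lambda+i\omega_j$, let $H^5_1,\dots,H^5_n$ be complex polynomials in $u_1,\dots,u_n,\bar u_1,\dots,\bar u_n$ such that for each $k$ the $k$th non-resonance condition of $H^5_k$ holds, and set $P_k:=\widehat{H}^5_k$ (the $k$th modified polynomial of $H^5_k$) and $P=(P_1,\dots,P_n)$. Define $$L^1_k(u):=[P_k\|(\beta_1u_1|u_1|^2,\dots,\beta_nu_n|u_n|^2)](u),\qquad L^2_k(u):=[\beta_ku_k|u_k|^2\|P](u).$$ Then $S_k(u):=L^1_k(u)-L^2_k(u)$ can be expressed as a sum of (complex multiples of) terms of the form $u_k^2\overline{R(u)}$ and $|u_j|^2R(u)$, with $j\in\{1,\dots,n\}$ and $R(u)$ a monomial term appearing in $P_k(u)$.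
   Context: For a monomial $c\,u_1^{s_1}\cdots u_n^{s_n}\bar u_1^{t_1}\cdots\bar u_n^{t_n}$, its $k$th non-resonance condition is $\sum_j s_j\omega_j-\sum_j t_j\omega_j-\omega_k\neq0$; that of a polynomial is the conjunction over its monomial terms. The modified polynomial $\widehat{H}^5_k$ is obtained from $H^5_k$ by dividing each monomial $c\,u^{s}\bar u^{t}$ by $\sum_j s_j\gamma_j+\sum_j t_j\bar\gamma_j-\gamma_k$. The bracket is $[R\|S](u)=\sum_{j}\Big(\frac{\partial R}{\partial u_j}S_j+\frac{\partial R}{\partial\bar u_j}\overline{S_j}\Big)$, treating $u_j,\bar u_j$ as independent variables. *)

theory Defs
  imports Complex_Main
begin

text \<open>Complex polynomials in u_0..u_{n-1}, conj u_0..conj u_{n-1} (indices 0-based),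
  represented by their coefficient function on exponent pairs (s,t):
  the monomial term with exponents (s,t) is  c * prod_j u_j^(s j) * conj(u_j)^(t j).\<close>

type_synonym mono = "(nat \<Rightarrow> nat) \<times> (nat \<Rightarrow> nat)"
type_synonym cpoly = "mono \<Rightarrow> complex"

definition is_poly :: "nat \<Rightarrow> cpoly \<Rightarrow> bool" where
  "is_poly n p \<longleftrightarrow> finite {m. p m \<noteq> 0} \<and>
     (\<forall>s t. p (s, t) \<noteq> 0 \<longrightarrow> (\<forall>j\<ge>n. s j = 0 \<and> t j = 0))"

definition mon_eval :: "nat \<Rightarrow> mono \<Rightarrow> (nat \<Rightarrow> complex) \<Rightarrow> complex" where
  "mon_eval n m u = (\<Prod>j<n. u j ^ fst m j * cnj (u j) ^ snd m j)"

definition peval :: "nat \<Rightarrow> cpoly \<Rightarrow> (nat \<Rightarrow> complex) \<Rightarrow> complex" where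
  "peval n p u = (\<Sum>m\<in>{m. p m \<noteq> 0}. p m * mon_eval n m u)"

definition du :: "nat \<Rightarrow> cpoly \<Rightarrow> cpoly" where
  "du j p = (\<lambda>(s, t). of_nat (s j + 1) * p (s(j := s j + 1), t))"

definition dub :: "nat \<Rightarrow> cpoly \<Rightarrow> cpoly" where
  "dub j p = (\<lambda>(s, t). of_nat (t j + 1) * p (s, t(j := t j + 1)))"

definition bracket :: "nat \<Rightarrow> cpoly \<Rightarrow> (nat \<Rightarrow> cpoly) \<Rightarrow> (nat \<Rightarrow> complex) \<Rightarrow> complex" where
  "bracket n R S u = (\<Sum>j<n. peval n (du j R) u * peval n (S j) u
                            + peval n (dub j R) u * cnj (peval n (S j) u))"

definition nonres :: "nat \<Rightarrow> (nat \<Rightarrow> real) \<Rightarrow> nat \<Rightarrow> cpoly \<Rightarrow> bool" where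
  "nonres n \<omega> k p \<longleftrightarrow> (\<forall>s t. p (s, t) \<noteq> 0 \<longrightarrow>
      (\<Sum>j<n. real (s j) * \<omega> j) - (\<Sum>j<n. real (t j) * \<omega> j) - \<omega> k \<noteq> 0)"

definition modp :: "nat \<Rightarrow> (nat \<Rightarrow> complex) \<Rightarrow> nat \<Rightarrow> cpoly \<Rightarrow> cpoly" where
  "modp n \<gamma> k p = (\<lambda>(s, t). p (s, t) /
      ((\<Sum>j<n. of_nat (s j) * \<gamma> j) + (\<Sum>j<n. of_nat (t j) * cnj (\<gamma> j)) - \<gamma> k))"

definition cubep :: "complex \<Rightarrow> nat \<Rightarrow> cpoly" where
  "cubep b j = (\<lambda>(s, t). if s = (\<lambda>_. 0)(j := 2) \<and> t = (\<lambda>_. 0)(j := 1) then b else 0)"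

end

theory Submission
  imports Defs
begin

text \<open>A monomial R = c u^s conj(u)^t is an eigenvector of the Euler operators:
  u_j dR/du_j = s_j R and conj(u_j) dR/dconj(u_j) = t_j R. Since the j-th cubic field
  beta_j u_j |u_j|^2 carries the factor u_j (and its conjugate the factor conj(u_j)), L^1_k is
  the sum over the monomials R of P_k and over j of (s_j beta_j + t_j conj(beta_j)) |u_j|^2 R,
  while L^2_k = 2 beta_k |u_k|^2 P_k + beta_k u_k^2 conj(P_k) involves only the k-th cube.\<close>

lemma fun_upd_Suc_eq_iff: "s(j := Suc (s j)) = s'(j := Suc a) \<longleftrightarrow> s = s'(j := a)"
  by (auto simp: fun_eq_iff)

lemma inj_fun_upd_Suc: "inj (\<lambda>s. s(j := Suc (s j)))"
  by (rule injI) (metis fun_upd_Suc_eq_iff fun_upd_triv)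

lemma fun_upd_Suc_eq_single_iff:
  "s(i := Suc (s i)) = (\<lambda>_. 0)(k := Suc a) \<longleftrightarrow> i = k \<and> s = (\<lambda>_. 0)(k := a)"
proof (cases "i = k")
  case False
  then show ?thesis by (metis fun_upd_same fun_upd_other nat.distinct(1))
qed (simp add: fun_upd_Suc_eq_iff)

lemma mon_eval_fun_upd:
  assumes "j < n"
  shows "mon_eval n (s(j := Suc (s j)), t) u = mon_eval n (s, t) u * u j"
    and "mon_eval n (s, t(j := Suc (t j))) u = mon_eval n (s, t) u * cnj (u j)"
  using assms by (simp_all add: mon_eval_def prod.If_cases Int_absorb1 prod.remove ac_simps)

lemma mon_eval_single:
  assumes "k < n"
  shows "mon_eval n ((\<lambda>_. 0)(k := a), (\<lambda>_. 0)(k := b)) u = u k ^ a * cnj (u k) ^ b"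
proof -
  have "mon_eval n ((\<lambda>_. 0)(k := a), (\<lambda>_. 0)(k := b)) u
      = (\<Prod>j<n. if j = k then u k ^ a * cnj (u k) ^ b else 1)"
    unfolding mon_eval_def by (rule prod.cong) auto
  then show ?thesis using assms by simp
qed

lemma peval_single: "peval n (\<lambda>m. if m = m0 then c else 0) u = c * mon_eval n m0 u"
proof (cases "c = 0")
  case False
  then have "{m. (if m = m0 then c else 0) \<noteq> 0} = {m0}" by auto
  then show ?thesis unfolding peval_def by simp
qed (simp add: peval_def)

lemma peval_zero: "peval n (\<lambda>_. 0) u = 0"
  by (simp add: peval_def)

lemma peval_superset:
  assumes "finite T" "{m. p m \<noteq> 0} \<subseteq> T"
  shows "peval n p u = (\<Sum>m\<in>T. p m * mon_eval n m u)"
  unfolding peval_def using assms by (intro sum.mono_neutral_left) auto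

lemma finite_support_modp:
  "finite {m. p m \<noteq> 0} \<Longrightarrow> finite {m. modp n \<gamma> k p m \<noteq> 0}"
  by (erule rev_finite_subset) (auto simp: modp_def)

lemma sum_vimage_inj:
  assumes "finite S" "inj h" "\<And>x. x \<in> S \<Longrightarrow> x \<notin> range h \<Longrightarrow> f x = 0"
  shows "(\<Sum>x\<in>h -` S. f (h x)) = (\<Sum>x\<in>S. f x)"
proof -
  have "(\<Sum>x\<in>h -` S. f (h x)) = (\<Sum>x\<in>S \<inter> range h. f x)"
    using sum.reindex[OF inj_on_subset[OF assms(2)], of "h -` S" f] by simp
  also have "\<dots> = (\<Sum>x\<in>S. f x)"
    using assms by (intro sum.mono_neutral_left) auto
  finally show ?thesis .
qed

lemma peval_shift_mult:
  assumes fin: "finite {m. p m \<noteq> 0}" and "inj h"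
    and q: "\<And>m. q m = w (h m) * p (h m)"
    and mon: "\<And>m. mon_eval n (h m) u = mon_eval n m u * x"
    and outside: "\<And>m. m \<notin> range h \<Longrightarrow> w m = 0"
  shows "peval n q u * x = (\<Sum>m\<in>{m. p m \<noteq> 0}. w m * p m * mon_eval n m u)"
proof -
  have "peval n q u = (\<Sum>m\<in>h -` {m. p m \<noteq> 0}. q m * mon_eval n m u)"
    using fin \<open>inj h\<close> by (intro peval_superset finite_vimageI) (auto simp: q)
  then have "peval n q u * x = (\<Sum>m\<in>h -` {m. p m \<noteq> 0}. w (h m) * p (h m) * mon_eval n (h m) u)"
    by (simp add: sum_distrib_right q mon mult.assoc)
  also have "\<dots> = (\<Sum>m\<in>{m. p m \<noteq> 0}. w m * p m * mon_eval n m u)"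
    by (rule sum_vimage_inj[OF fin \<open>inj h\<close>, where f = "\<lambda>m. w m * p m * mon_eval n m u"])
      (simp add: outside)
  finally show ?thesis .
qed

lemma peval_du_mult:
  assumes "finite {m. p m \<noteq> 0}" and "j < n"
  shows "peval n (du j p) u * u j = (\<Sum>m\<in>{m. p m \<noteq> 0}. of_nat (fst m j) * p m * mon_eval n m u)"
proof (rule peval_shift_mult[where h = "map_prod (\<lambda>s. s(j := Suc (s j))) id"])
  show "inj (map_prod (\<lambda>s. s(j := Suc (s j))) id)"
    using map_prod_inj_on[OF inj_fun_upd_Suc inj_on_id[of UNIV]] by simp
  fix m :: mono
  show "du j p m = of_nat (fst (map_prod (\<lambda>s. s(j := Suc (s j))) id m) j)
      * p (map_prod (\<lambda>s. s(j := Suc (s j))) id m)"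
    by (cases m) (simp add: du_def)
  show "mon_eval n (map_prod (\<lambda>s. s(j := Suc (s j))) id m) u = mon_eval n m u * u j"
    using assms(2) by (cases m) (simp add: mon_eval_fun_upd)
  assume outside: "m \<notin> range (map_prod (\<lambda>s. s(j := Suc (s j))) id)"
  show "of_nat (fst m j) = (0::complex)"
  proof (rule ccontr)
    assume "of_nat (fst m j) \<noteq> (0::complex)"
    then obtain a where "fst m j = Suc a" using not0_implies_Suc by fastforce
    then have "m = map_prod (\<lambda>s. s(j := Suc (s j))) id ((fst m)(j := a), snd m)"
      by (cases m) auto
    with outside show False by blast
  qed
qed (fact assms(1))

lemma peval_dub_mult:
  assumes "finite {m. p m \<noteq> 0}" and "j < n"
  shows "peval n (dub j p) u * cnj (u j) = (\<Sum>m\<in>{m. p m \<noteq> 0}. of_nat (snd m j) * p m * mon_eval n m u)"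
proof (rule peval_shift_mult[where h = "map_prod id (\<lambda>t. t(j := Suc (t j)))"])
  show "inj (map_prod id (\<lambda>t. t(j := Suc (t j))))"
    using map_prod_inj_on[OF inj_on_id[of UNIV] inj_fun_upd_Suc] by simp
  fix m :: mono
  show "dub j p m = of_nat (snd (map_prod id (\<lambda>t. t(j := Suc (t j))) m) j)
      * p (map_prod id (\<lambda>t. t(j := Suc (t j))) m)"
    by (cases m) (simp add: dub_def)
  show "mon_eval n (map_prod id (\<lambda>t. t(j := Suc (t j))) m) u = mon_eval n m u * cnj (u j)"
    using assms(2) by (cases m) (simp add: mon_eval_fun_upd)
  assume outside: "m \<notin> range (map_prod id (\<lambda>t. t(j := Suc (t j))))"
  show "of_nat (snd m j) = (0::complex)"
  proof (rule ccontr)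
    assume "of_nat (snd m j) \<noteq> (0::complex)"
    then obtain a where "snd m j = Suc a" using not0_implies_Suc by fastforce
    then have "m = map_prod id (\<lambda>t. t(j := Suc (t j))) (fst m, (snd m)(j := a))"
      by (cases m) auto
    with outside show False by blast
  qed
qed (fact assms(1))

lemma peval_cubep:
  assumes "j < n"
  shows "peval n (cubep b j) u = b * (u j)\<^sup>2 * cnj (u j)"
proof -
  have "cubep b j = (\<lambda>m. if m = ((\<lambda>_. 0)(j := 2), (\<lambda>_. 0)(j := 1)) then b else 0)"
    by (auto simp: cubep_def fun_eq_iff)
  with assms show ?thesis by (simp add: peval_single mon_eval_single)
qed

lemma du_cubep:
  "du i (cubep b k) = (\<lambda>m. if i = k \<and> m = ((\<lambda>_. 0)(k := 1), (\<lambda>_. 0)(k := 1)) then 2 * b else 0)"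
proof (intro ext, clarify)
  fix s t :: "nat \<Rightarrow> nat"
  show "du i (cubep b k) (s, t) = (if i = k \<and> (s, t) = ((\<lambda>_. 0)(k := 1), (\<lambda>_. 0)(k := 1)) then 2 * b else 0)"
    using fun_upd_Suc_eq_single_iff[of s i k 1]
    by (simp add: du_def cubep_def numeral_2_eq_2)
qed

lemma dub_cubep:
  "dub i (cubep b k) = (\<lambda>m. if i = k \<and> m = ((\<lambda>_. 0)(k := 2), (\<lambda>_. 0)(k := 0)) then b else 0)"
proof (intro ext, clarify)
  fix s t :: "nat \<Rightarrow> nat"
  show "dub i (cubep b k) (s, t) = (if i = k \<and> (s, t) = ((\<lambda>_. 0)(k := 2), (\<lambda>_. 0)(k := 0)) then b else 0)"
    using fun_upd_Suc_eq_single_iff[of t i k 0]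
    by (auto simp: dub_def cubep_def)
qed

lemma bracket_cubep_left:
  assumes "k < n"
  shows "bracket n (cubep b k) S u
    = 2 * b * (u k * cnj (u k)) * peval n (S k) u + b * (u k)\<^sup>2 * cnj (peval n (S k) u)"
proof -
  have "bracket n (cubep b k) S u = (\<Sum>j<n. if j = k then
      2 * b * (u k * cnj (u k)) * peval n (S k) u + b * (u k)\<^sup>2 * cnj (peval n (S k) u) else 0)"
    unfolding bracket_def using assms
    by (intro sum.cong) (auto simp: du_cubep dub_cubep peval_single mon_eval_single peval_zero)
  with assms show ?thesis by simp
qed

lemma bracket_cubep_right:
  assumes "finite {m. R m \<noteq> 0}"
  shows "bracket n R (\<lambda>j. cubep (\<beta> j) j) u
    = (\<Sum>j<n. \<Sum>m\<in>{m. R m \<noteq> 0}. (of_nat (fst m j) * \<beta> j + of_nat (snd m j) * cnj (\<beta> j))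
        * (u j * cnj (u j)) * (R m * mon_eval n m u))"
  unfolding bracket_def
proof (rule sum.cong[OF refl])
  fix j assume "j \<in> {..<n}"
  then have j: "j < n" by simp
  have "peval n (du j R) u * peval n (cubep (\<beta> j) j) u
      + peval n (dub j R) u * cnj (peval n (cubep (\<beta> j) j) u)
      = \<beta> j * (u j * cnj (u j)) * (peval n (du j R) u * u j)
      + cnj (\<beta> j) * (u j * cnj (u j)) * (peval n (dub j R) u * cnj (u j))"
    using j by (simp add: peval_cubep power2_eq_square algebra_simps)
  also have "\<dots> = (\<Sum>m\<in>{m. R m \<noteq> 0}. (of_nat (fst m j) * \<beta> j + of_nat (snd m j) * cnj (\<beta> j))
        * (u j * cnj (u j)) * (R m * mon_eval n m u))"
    unfolding peval_du_mult[OF assms j] peval_dub_mult[OF assms j]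
      sum_distrib_left sum.distrib[symmetric]
    by (intro sum.cong) (simp_all add: algebra_simps)
  finally show "peval n (du j R) u * peval n (cubep (\<beta> j) j) u
      + peval n (dub j R) u * cnj (peval n (cubep (\<beta> j) j) u) = \<dots>" .
qed

definition cube_coeff :: "(nat \<Rightarrow> complex) \<Rightarrow> nat \<Rightarrow> mono \<Rightarrow> nat \<Rightarrow> complex" where
  "cube_coeff \<beta> k m j =
     of_nat (fst m j) * \<beta> j + of_nat (snd m j) * cnj (\<beta> j) - (if j = k then 2 * \<beta> k else 0)"

lemma bracket_cubes_diff:
  assumes fin: "finite {m. S k m \<noteq> 0}" and k: "k < n"
  shows "bracket n (S k) (\<lambda>j. cubep (\<beta> j) j) u - bracket n (cubep (\<beta> k) k) S u
    = (\<Sum>m\<in>{m. S k m \<noteq> 0}. - \<beta> k * (u k)\<^sup>2 * cnj (S k m * mon_eval n m u)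
        + (\<Sum>j<n. cube_coeff \<beta> k m j * complex_of_real ((cmod (u j))\<^sup>2) * (S k m * mon_eval n m u)))"
    (is "?lhs = ?rhs")
proof -
  define T where "T = {m. S k m \<noteq> 0}"
  define r where "r m = S k m * mon_eval n m u" for m
  define N where "N j = u j * cnj (u j)" for j
  define c where "c m j = of_nat (fst m j) * \<beta> j + of_nat (snd m j) * cnj (\<beta> j)" for m j
  have inner: "(\<Sum>j<n. cube_coeff \<beta> k m j * N j * r m)
      = (\<Sum>j<n. c m j * N j * r m) - 2 * \<beta> k * N k * r m" for m
  proof -
    have "(\<Sum>j<n. cube_coeff \<beta> k m j * N j * r m)
        = (\<Sum>j<n. c m j * N j * r m - (if j = k then 2 * \<beta> k * N k * r m else 0))"
      by (intro sum.cong) (simp_all add: cube_coeff_def c_def algebra_simps)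
    with k show ?thesis by (simp add: sum_subtractf)
  qed
  have "?rhs = (\<Sum>m\<in>T. (\<Sum>j<n. c m j * N j * r m) - (2 * \<beta> k * N k * r m + \<beta> k * (u k)\<^sup>2 * cnj (r m)))"
    unfolding T_def[symmetric] r_def[symmetric] complex_norm_square N_def[symmetric] inner
    by (simp add: algebra_simps)
  also have "\<dots> = (\<Sum>j<n. \<Sum>m\<in>T. c m j * N j * r m)
      - (2 * \<beta> k * N k * (\<Sum>m\<in>T. r m) + \<beta> k * (u k)\<^sup>2 * cnj (\<Sum>m\<in>T. r m))"
    by (simp add: sum_subtractf sum.distrib sum_distrib_left cnj_sum sum.swap[of _ T])
  also have "\<dots> = ?lhs"
    using bracket_cubep_right[OF fin, of n \<beta> u] bracket_cubep_left[OF k, of "\<beta> k" S u]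
    by (simp add: T_def r_def N_def c_def peval_def)
  finally show ?thesis ..
qed

theorem mainTheorem9:
  fixes n k :: nat and lam :: real and \<omega> :: "nat \<Rightarrow> real"
    and \<beta> \<gamma> :: "nat \<Rightarrow> complex" and H P :: "nat \<Rightarrow> cpoly"
  assumes gamma_def: "\<forall>j<n. \<gamma> j = complex_of_real lam + \<i> * complex_of_real (\<omega> j)"
    and gamma_nz: "\<forall>j<n. \<gamma> j \<noteq> 0"
    and beta_nz: "\<forall>j<n. \<beta> j \<noteq> 0"
    and H_poly: "\<forall>j<n. is_poly n (H j)"
    and H_nonres: "\<forall>j<n. nonres n \<omega> j (H j)"
    and P_def: "\<forall>j<n. P j = modp n \<gamma> j (H j)"
    and k: "k < n"
  shows "\<exists>(a :: mono \<Rightarrow> nat \<Rightarrow> complex) (b :: mono \<Rightarrow> complex). \<forall>u.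
           bracket n (P k) (\<lambda>j. cubep (\<beta> j) j) u - bracket n (cubep (\<beta> k) k) P u
         = (\<Sum>m\<in>{m. P k m \<noteq> 0}.
              b m * (u k)\<^sup>2 * cnj (P k m * mon_eval n m u)
              + (\<Sum>j<n. a m j * complex_of_real ((cmod (u j))\<^sup>2) * (P k m * mon_eval n m u)))"
proof -
  have "finite {m. H k m \<noteq> 0}"
    using H_poly k by (simp add: is_poly_def)
  then have "finite {m. P k m \<noteq> 0}"
    using P_def k by (simp add: finite_support_modp)
  then show ?thesis
    using bracket_cubes_diff[where \<beta> = \<beta> and S = P and n = n and k = k] k
    by (intro exI[of _ "cube_coeff \<beta> k"] exI[of _ "\<lambda>_. - \<beta> k"]) simp
qed

end
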